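(* Let ${\boldsymbol{k}}=(k_1,\dots,k_r)\in\mathbb{Z}^r$ with $r\ge2$, and suppose $k_i=-k$ for some $i\in\{1,\dots,r\}$ and some integer $k\ge0$. Then in $\widehat{\mathcal{A}}$: (i) If $i=1$, \[\zeta_{\widehat{\mathcal{A}}}({\boldsymbol{k}})=\frac{1}{k+1}\sum_{j=0}^{k+1}\binom{k+1}{j}B_j\Bigl((-1)^j\zeta_{\widehat{\mathcal{A}}}(k_2-k-1+j,k_3,\dots,k_r)-\delta_{j,k+1}\,\zeta_{\widehat{\mathcal{A}}}(k_2,\dots,k_r)\Bigr).\] (ii) If $1<i<r$, \[\zeta_{\widehat{\mathcal{A}}}({\boldsymbol{k}})=\frac{1}{k+1}\sum_{j=0}^{k+1}\binom{k+1}{j}B_j\Bigl((-1)^j\zeta_{\widehat{\mathcal{A}}}({\boldsymbol{k}}^{+}_j)-\zeta_{\widehat{\mathcal{A}}}({\boldsymbol{k}}^{-}_j)\Bigr),\] where ${\boldsymbol{k}}^{+}_j=(k_1,\dots,k_{i-1},k_{i+1}-k-1+j,k_{i+2},\dots,k_r)$ and ${\boldsymbol{k}}^{-}_j=(k_1,\dots,k_{i-2},k_{i-1}-k-1+j,k_{i+1},\dots,k_r)$ (both obtained from ${\boldsymbol{k}}$ by deleting the $i$-th entry and modifying the indicated neighbouring entry). (iii) If $i=r$, \[\zeta_{\widehat{\mathcal{A}}}({\boldsymbol{k}})=\frac{1}{k+1}\sum_{j=0}^{k+1}\binom{k+1}{j}B_j\Bigl((-1)^j\zeta_{\widehat{\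mathcal{A}}}(k_1,\dots,k_{r-1})\,{\boldsymbol{p}}^{k+1-j}-\zeta_{\widehat{\mathcal{A}}}(k_1,\dots,k_{r-2},k_{r-1}-k-1+j)\Bigr).\]
   Context: $B_n$ are the Seki–Bernoulli numbers defined by $ze^z/(e^z-1)=\sum_{n\ge0}B_nz^n/n!$ (so $B_1=1/2$), and $\delta$ is the Kronecker delta. Let $\widehat{\mathcal{A}}=\varprojlim_n\bigl[(\prod_{p}\mathbb{Z}/p^n\mathbb{Z})/(\bigoplus_p\mathbb{Z}/p^n\mathbb{Z})\bigr]$ ($p$ over primes), a $\mathbb{Q}$-algebra. For any integer index ${\boldsymbol{k}}=(k_1,\dots,k_r)$ (entries possibly non-positive) and prime $p$, $\zeta_p({\boldsymbol{k}})=\sum_{0<n_1<\cdots<n_r<p}n_1^{-k_1}\cdots n_r^{-k_r}\in\mathbb{Z}_{(p)}$, and $\zeta_{\widehat{\mathcal{A}}}({\boldsymbol{k}})=\bigl((\zeta_p({\boldsymbol{k}})\bmod p^n)_p\bigr)_n$; for the empty index this value is $1$. ${\boldsymbol{p}}=((p\bmod p^n)_p)_n\in\widehat{\mathcal{A}}$, with ${\boldsymbol{p}}^0=1$. *)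

theory Defs
  imports Complex_Main "HOL-Computational_Algebra.Computational_Algebra"
begin

(* Seki-Bernoulli numbers: z e^z/(e^z-1) = sum B_n z^n/n!, i.e. the unique formal
   power series F with F * (e^z - 1) = z e^z; B_n = n! * [z^n] F. *)
definition seki_bernoulli :: "nat \<Rightarrow> rat" where
  "seki_bernoulli n =
     fact n * fps_nth (THE F :: rat fps. F * (fps_exp 1 - 1) = fps_X * fps_exp 1) n"

definition zeta_p :: "nat \<Rightarrow> int list \<Rightarrow> rat" where
  "zeta_p p ks =
     (\<Sum>ns \<in> {ns. length ns = length ks \<and> sorted_wrt (<) ns \<and> set ns \<subseteq> {1..<p}}.
        \<Prod>i<length ks. (of_nat (ns ! i) :: rat) powi (- (ks ! i)))"

(* An element of A-hat is represented by a family (a_p)_p of rationals (indexed by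
   primes p, p-integral for almost all p).  Two families give the same element of
   A-hat iff for every n they agree modulo p^n Z_(p) for all but finitely many primes p. *)
definition padic_cong :: "nat \<Rightarrow> nat \<Rightarrow> rat \<Rightarrow> rat \<Rightarrow> bool" where
  "padic_cong p n a b \<longleftrightarrow>
     (\<exists>u v :: int. \<not> int p dvd v \<and> a - b = of_int (int p ^ n * u) / of_int v)"

definition ahat_eq :: "(nat \<Rightarrow> rat) \<Rightarrow> (nat \<Rightarrow> rat) \<Rightarrow> bool" (infix "\<doteq>\<^sub>A" 50) where
  "a \<doteq>\<^sub>A b \<longleftrightarrow> (\<forall>n. finite {p. prime p \<and> \<not> padic_cong p n (a p) (b p)})"

definition zeta_A :: "int list \<Rightarrow> nat \<Rightarrow> rat" where
  "zeta_A ks = (\<lambda>p. zeta_p p ks)"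

end

(*
  Sum first over the variable n_i, which enters as the power n_i^k (k_i = -k).  With its
  neighbours n_(i-1) < n_i < n_(i+1) fixed (where n_0 = 0 and n_(r+1) = p), Faulhaber's
  formula in the Seki-Bernoulli normalisation

    sum_(a<n<b) n^k = 1/(k+1) sum_(j=0..k+1) C(k+1,j) B_j ((-1)^j b^(k+1-j) - a^(k+1-j))

  turns the inner sum into powers of the two neighbours, and these powers are absorbed
  into the exponents k_(i-1) and k_(i+1) (at the boundary they give the factor p^(k+1-j),
  resp. 0^(k+1-j) = delta_(j,k+1)).  The resulting identity already holds in Q for every
  single prime p, hence in A-hat.

  Faulhaber's formula comes from the generating function F(z) = z e^z/(e^z - 1): the
  polynomial P(x) = m! [z^m] F(z) e^(xz) satisfies P(x + 1) - P(x) = m (x + 1)^(m-1)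
  because F(z) (e^z - 1) = z e^z, and F(-z) = F(z) e^(-z) produces the signs (-1)^j.
*)

theory Submission
  imports Defs
begin

lemma subdegree_fps_exp_minus_1:
  assumes "c \<noteq> 0"
  shows "subdegree (fps_exp (c :: 'a :: field_char_0) - 1) = 1"
  by (rule subdegreeI) (use assms in \<open>auto simp: less_Suc_eq\<close>)

lemma bernoulli_fps_ex1: "\<exists>!F :: rat fps. F * (fps_exp 1 - 1) = fps_X * fps_exp 1"
proof -
  have E: "fps_exp (1 :: rat) - 1 \<noteq> 0"
    using subdegree_fps_exp_minus_1[of "1 :: rat"] by (metis subdegree_0 zero_neq_one)
  have "subdegree (fps_exp (1 :: rat) - 1) \<le> subdegree (fps_X * fps_exp (1 :: rat))"
    using subdegree_fps_exp_minus_1[of "1 :: rat"] by simp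
  then have "fps_exp 1 - 1 dvd fps_X * fps_exp (1 :: rat)"
    using E by (simp add: fps_dvd_iff)
  then obtain F :: "rat fps" where "fps_X * fps_exp 1 = (fps_exp 1 - 1) * F" ..
  then have "F * (fps_exp 1 - 1) = fps_X * fps_exp 1" by (simp add: mult.commute)
  moreover have "G = F" if "G * (fps_exp 1 - 1) = fps_X * fps_exp 1" for G
    using that calculation E by (metis mult_right_cancel)
  ultimately show ?thesis by blast
qed

definition bernoulli_fps :: "rat fps" where
  "bernoulli_fps = (THE F. F * (fps_exp 1 - 1) = fps_X * fps_exp 1)"

lemma bernoulli_fps_eq: "bernoulli_fps * (fps_exp 1 - 1) = fps_X * fps_exp 1"
  unfolding bernoulli_fps_def by (rule theI'[OF bernoulli_fps_ex1])

lemma bernoulli_fps_unique: "F * (fps_exp 1 - 1) = fps_X * fps_exp 1 \<Longrightarrow> F = bernoulli_fps"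
  using bernoulli_fps_ex1 bernoulli_fps_eq by blast

lemma seki_bernoulli_conv_fps: "seki_bernoulli n = fact n * bernoulli_fps $ n"
  unfolding seki_bernoulli_def bernoulli_fps_def ..

lemma bernoulli_fps_reflect: "(bernoulli_fps oo - fps_X) * fps_exp 1 = bernoulli_fps"
proof (rule bernoulli_fps_unique)
  let ?R = "bernoulli_fps oo - fps_X"
  have reflected: "?R * (fps_exp (- 1) - 1) = - fps_X * fps_exp (- 1)"
    using arg_cong[OF bernoulli_fps_eq, of "\<lambda>F. F oo - fps_X"]
    by (simp add: fps_compose_mult_distrib fps_compose_sub_distrib)
  have inv: "fps_exp (- 1) * fps_exp 1 = (1 :: rat fps)"
    using fps_exp_add_mult[of "- 1 :: rat" 1] by simp
  have "?R * (1 - fps_exp 1) = ?R * (fps_exp (- 1) - 1) * fps_exp 1"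
    using inv by (simp add: algebra_simps)
  also have "\<dots> = - fps_X * (fps_exp (- 1) * fps_exp 1)"
    unfolding reflected by (simp only: mult.assoc)
  finally have "?R * (1 - fps_exp 1) = - fps_X"
    using inv by simp
  then have "?R * (fps_exp 1 - 1) = fps_X"
    by (metis minus_diff_eq mult_minus_right neg_equal_iff_equal)
  then show "?R * fps_exp 1 * (fps_exp 1 - 1) = fps_X * fps_exp 1"
    by (simp add: algebra_simps)
qed

definition appell_poly :: "'a :: field_char_0 fps \<Rightarrow> nat \<Rightarrow> 'a \<Rightarrow> 'a" where
  "appell_poly A m x = fact m * (A * fps_exp x) $ m"

lemma appell_poly_eq_sum:
  "appell_poly A m x = (\<Sum>j = 0..m. of_nat (m choose j) * (fact j * A $ j) * x ^ (m - j))"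
  unfolding appell_poly_def fps_mult_nth sum_distrib_left
proof (rule sum.cong[OF refl])
  fix j assume "j \<in> {0..m}"
  then have "of_nat (m choose j) = (fact m / (fact j * fact (m - j)) :: 'a)"
    by (simp add: binomial_fact)
  then show "fact m * (A $ j * fps_exp x $ (m - j))
      = of_nat (m choose j) * (fact j * A $ j) * x ^ (m - j)"
    by (simp add: field_simps)
qed

lemma appell_poly_add: "appell_poly A m (x + y) = appell_poly (A * fps_exp y) m x"
  unfolding appell_poly_def by (simp add: fps_exp_add_mult algebra_simps)

lemma appell_poly_diff: "appell_poly (A - B) m x = appell_poly A m x - appell_poly B m x"
  unfolding appell_poly_def by (simp add: algebra_simps)

lemma appell_poly_X_mult: "appell_poly (fps_X * A) (Suc m) x = of_nat (Suc m) * appell_poly A m x"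
  unfolding appell_poly_def by (simp add: mult.assoc)

lemma appell_poly_one: "appell_poly 1 m x = x ^ m"
  unfolding appell_poly_def by simp

lemma appell_poly_bernoulli_step:
  "appell_poly bernoulli_fps (Suc k) (x + 1) - appell_poly bernoulli_fps (Suc k) x
     = of_nat (Suc k) * (x + 1) ^ k"
proof -
  have "appell_poly bernoulli_fps (Suc k) (x + 1) - appell_poly bernoulli_fps (Suc k) x
      = appell_poly (bernoulli_fps * (fps_exp 1 - 1)) (Suc k) x"
    using appell_poly_add[of bernoulli_fps "Suc k" x 1]
    by (simp add: appell_poly_diff[symmetric] algebra_simps)
  also have "\<dots> = of_nat (Suc k) * appell_poly (fps_exp 1) k x"
    by (simp add: bernoulli_fps_eq appell_poly_X_mult)
  also have "appell_poly (fps_exp 1) k x = (x + 1) ^ k"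
    using appell_poly_add[of 1 k x 1] by (simp add: appell_poly_one)
  finally show ?thesis .
qed

lemma sum_powers_appell_poly:
  assumes "a \<le> b"
  shows "of_nat (Suc k) * (\<Sum>n\<in>{a<..b}. of_nat n ^ k)
           = appell_poly bernoulli_fps (Suc k) (of_nat b)
             - appell_poly bernoulli_fps (Suc k) (of_nat a)"
  using assms
proof (induction b rule: dec_induct)
  case (step b)
  have "{a<..Suc b} = insert (Suc b) {a<..b}" using step.hyps by auto
  then show ?case
    using step.IH appell_poly_bernoulli_step[of k "of_nat b"] by (simp add: algebra_simps)
qed simp

lemma sum_powers_seki_bernoulli:
  assumes "a < b"
  shows "(\<Sum>n\<in>{a<..<b}. of_nat n ^ k) = 1 / of_nat (k + 1) * (\<Sum>j = 0..k + 1.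
           of_nat ((k + 1) choose j) * seki_bernoulli j *
           ((-1) ^ j * of_nat b ^ (k + 1 - j) - of_nat a ^ (k + 1 - j)))"
proof -
  have b: "of_nat b = of_nat (b - 1) + (1 :: rat)" and "{a<..<b} = {a<..b - 1}"
    using assms by auto
  then have "of_nat (Suc k) * (\<Sum>n\<in>{a<..<b}. of_nat n ^ k)
      = appell_poly (bernoulli_fps oo - fps_X) (Suc k) (of_nat b)
        - appell_poly bernoulli_fps (Suc k) (of_nat a)"
    using sum_powers_appell_poly[of a "b - 1" k] assms
    by (simp only: b appell_poly_add bernoulli_fps_reflect)
  also have "\<dots> = (\<Sum>j = 0..k + 1. of_nat ((k + 1) choose j) * seki_bernoulli j *
           ((-1) ^ j * of_nat b ^ (k + 1 - j) - of_nat a ^ (k + 1 - j)))"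
    by (simp add: appell_poly_eq_sum fps_compose_uminus' seki_bernoulli_conv_fps
        sum_subtractf[symmetric] algebra_simps)
  finally show ?thesis by (simp add: field_simps)
qed

lemma sorted_wrt_less_insert_iff:
  fixes xs :: "'a :: linorder list"
  assumes "0 < i" "i < length xs"
  shows "sorted_wrt (<) (take i xs @ x # drop i xs)
           \<longleftrightarrow> sorted_wrt (<) xs \<and> xs ! (i - 1) < x \<and> x < xs ! i"
proof -
  obtain as bs where as: "take i xs = as" and bs: "drop i xs = bs" by blast
  have xs: "xs = as @ bs" and "as \<noteq> []" "bs \<noteq> []"
    using assms as bs by auto
  have last: "last as = xs ! (i - 1)"
    using assms take_Suc_conv_app_nth[of "i - 1" xs] as by simp
  have hd: "hd bs = xs ! i"
    using assms bs by (auto simp: hd_drop_conv_nth)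
  have le_last: "a \<le> last as" if "sorted_wrt (<) as" "a \<in> set as" for a
    using that by (induction as) (auto intro: less_imp_le dest: bspec[OF _ last_in_set])
  have hd_le: "hd bs \<le> b" if "sorted_wrt (<) bs" "b \<in> set bs" for b
    using that by (cases bs) auto
  have "sorted_wrt (<) (as @ x # bs) \<longleftrightarrow> sorted_wrt (<) (as @ bs) \<and> last as < x \<and> x < hd bs"
    using \<open>as \<noteq> []\<close> \<open>bs \<noteq> []\<close> le_last hd_le
    by (auto simp: sorted_wrt_append intro: le_less_trans less_le_trans)
  then show ?thesis
    by (simp only: as bs flip: xs last hd)
qed

(* The summation range 0 < n_1 < ... < n_r < p of zeta_p, with the boundary values 0 and p
   attached: the neighbours of the entry at position m of ns are then the entries at
   positions m and m + 1 of the padded list.  Only for r = 0 and p = 0 does this differ from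
   the range in zeta_p, hence the hypotheses 0 < r and ks \<noteq> [] below. *)
definition zeta_chains :: "nat \<Rightarrow> nat \<Rightarrow> nat list set" where
  "zeta_chains p r = {ns. length ns = r \<and> sorted_wrt (<) (0 # ns @ [p])}"

lemma zeta_chains_iff:
  assumes "0 < r"
  shows "ns \<in> zeta_chains p r \<longleftrightarrow> length ns = r \<and> sorted_wrt (<) ns \<and> set ns \<subseteq> {1..<p}"
  using assms by (cases ns) (auto simp: zeta_chains_def sorted_wrt_append Suc_le_eq)

lemma finite_zeta_chains: "finite (zeta_chains p r)"
proof (rule finite_subset)
  show "zeta_chains p r \<subseteq> {ns. set ns \<subseteq> {..p} \<and> length ns = r}"
    by (auto simp: zeta_chains_def sorted_wrt_append less_imp_le)
  show "finite {ns. set ns \<subseteq> {..p} \<and> length ns = r}"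
    by (rule finite_lists_length_eq) simp
qed

lemma length_zeta_chains: "ns \<in> zeta_chains p r \<Longrightarrow> length ns = r"
  by (simp add: zeta_chains_def)

lemma zeta_chains_pos: "ns \<in> zeta_chains p r \<Longrightarrow> n \<in> set ns \<Longrightarrow> 0 < n"
  by (auto simp: zeta_chains_def)

definition chain_weight :: "int list \<Rightarrow> nat list \<Rightarrow> rat" where
  "chain_weight ks ns = prod_list (map2 (\<lambda>k n. of_nat n powi - k) ks ns)"

lemma chain_weight_append:
  "length ks1 = length ns1 \<Longrightarrow>
     chain_weight (ks1 @ ks2) (ns1 @ ns2) = chain_weight ks1 ns1 * chain_weight ks2 ns2"
  by (simp add: chain_weight_def)

lemma chain_weight_append_Cons:
  "length ks1 = length ns1 \<Longrightarrow>
     chain_weight (ks1 @ c # ks2) (ns1 @ n # ns2)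
       = chain_weight ks1 ns1 * of_nat n powi - c * chain_weight ks2 ns2"
  by (simp add: chain_weight_def)

lemma chain_weight_insert:
  assumes "length ks1 = m" "m \<le> length zs"
  shows "chain_weight (ks1 @ c # ks2) (take m zs @ n # drop m zs)
           = chain_weight (ks1 @ ks2) zs * of_nat n powi - c"
proof -
  have "chain_weight (ks1 @ c # ks2) (take m zs @ n # drop m zs)
      = chain_weight ks1 (take m zs) * of_nat n powi - c * chain_weight ks2 (drop m zs)"
    using assms by (simp add: chain_weight_append_Cons)
  also have "\<dots> = chain_weight (ks1 @ ks2) (take m zs @ drop m zs) * of_nat n powi - c"
    using assms by (subst chain_weight_append) (simp_all only: ac_simps length_take min_absorb2)
  finally show ?thesis
    by simp
qed

lemma zeta_p_eq_sum_chains: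
  assumes "ks \<noteq> []"
  shows "zeta_p p ks = (\<Sum>ns\<in>zeta_chains p (length ks). chain_weight ks ns)"
  unfolding zeta_p_def
proof (rule sum.cong)
  show "{ns. length ns = length ks \<and> sorted_wrt (<) ns \<and> set ns \<subseteq> {1..<p}}
        = zeta_chains p (length ks)"
    using assms by (simp add: zeta_chains_iff set_eq_iff)
next
  fix ns assume "ns \<in> zeta_chains p (length ks)"
  then have "length ns = length ks"
    by (rule length_zeta_chains)
  then show "(\<Prod>i<length ks. of_nat (ns ! i) powi - (ks ! i)) = chain_weight ks ns"
    by (simp add: chain_weight_def prod.list_conv_set_nth atLeast0LessThan)
qed

lemma insert_in_zeta_chains_iff:
  assumes "length zs = r" "m \<le> r"
  shows "take m zs @ n # drop m zs \<in> zeta_chains p (Suc r)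
           \<longleftrightarrow> zs \<in> zeta_chains p r \<and> n \<in> {(0 # zs @ [p]) ! m<..<(0 # zs @ [p]) ! Suc m}"
proof -
  let ?P = "0 # zs @ [p]"
  have padded: "0 # (take m zs @ n # drop m zs) @ [p] = take (Suc m) ?P @ n # drop (Suc m) ?P"
    using assms by simp
  have "0 < Suc m" "Suc m < length ?P"
    using assms by simp_all
  note insert_iff = sorted_wrt_less_insert_iff[OF this, of n, unfolded diff_Suc_1]
  have "length (take m zs @ n # drop m zs) = Suc r"
    using assms by simp
  then show ?thesis
    unfolding zeta_chains_def mem_Collect_eq padded insert_iff greaterThanLessThan_iff
    using assms by blast
qed

lemma zeta_chains_insert_bij:
  assumes "m \<le> r"
  shows "bij_betw (\<lambda>(zs, n). take m zs @ n # drop m zs)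
           (SIGMA zs:zeta_chains p r. {(0 # zs @ [p]) ! m<..<(0 # zs @ [p]) ! Suc m})
           (zeta_chains p (Suc r))"
    (is "bij_betw ?ins ?S _")
proof (rule bij_betw_byWitness[where f' = "\<lambda>ns. (take m ns @ drop (Suc m) ns, ns ! m)"])
  let ?del = "\<lambda>ns. (take m ns @ drop (Suc m) ns, ns ! m)"
  show "\<forall>x\<in>?S. ?del (?ins x) = x"
    using assms by (auto simp: length_zeta_chains nth_append)
  show "\<forall>ns\<in>zeta_chains p (Suc r). ?ins (?del ns) = ns"
    using assms by (auto simp: length_zeta_chains id_take_nth_drop[symmetric] min_def)
  show "?ins ` ?S \<subseteq> zeta_chains p (Suc r)"
    using assms insert_in_zeta_chains_iff length_zeta_chains by auto
  show "?del ` zeta_chains p (Suc r) \<subseteq> ?S"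
  proof
    fix x assume "x \<in> ?del ` zeta_chains p (Suc r)"
    then obtain ns where ns: "ns \<in> zeta_chains p (Suc r)" and x: "x = ?del ns"
      by blast
    define zs where "zs = take m ns @ drop (Suc m) ns"
    have "length zs = r" and "take m zs @ ns ! m # drop m zs = ns"
      using length_zeta_chains[OF ns] assms
      by (simp_all add: zs_def id_take_nth_drop[symmetric] min_def)
    then show "x \<in> ?S"
      using ns assms insert_in_zeta_chains_iff[of zs r m "ns ! m" p] by (simp add: x zs_def[symmetric])
  qed
qed

definition zeta_p_entry_power :: "nat \<Rightarrow> int list \<Rightarrow> nat \<Rightarrow> nat \<Rightarrow> rat" where
  "zeta_p_entry_power p ks i e =
     (\<Sum>zs\<in>zeta_chains p (length ks). chain_weight ks zs * of_nat ((0 # zs @ [p]) ! i) ^ e)"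

lemma zeta_p_entry_power_first:
  "ks \<noteq> [] \<Longrightarrow> zeta_p_entry_power p ks 0 e = 0 ^ e * zeta_p p ks"
  by (simp add: zeta_p_entry_power_def zeta_p_eq_sum_chains sum_distrib_left mult.commute)

lemma zeta_p_entry_power_last:
  "ks \<noteq> [] \<Longrightarrow> zeta_p_entry_power p ks (Suc (length ks)) e = zeta_p p ks * of_nat p ^ e"
  by (simp add: zeta_p_entry_power_def zeta_p_eq_sum_chains sum_distrib_right nth_append
      length_zeta_chains cong: sum.cong)

lemma zeta_p_entry_power_inner:
  "zeta_p_entry_power p (ls @ c # rs) (Suc (length ls)) e = zeta_p p (ls @ (c - int e) # rs)"
proof -
  have "chain_weight (ls @ c # rs) zs * of_nat ((0 # zs @ [p]) ! Suc (length ls)) ^ e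
      = chain_weight (ls @ (c - int e) # rs) zs"
    if zs: "zs \<in> zeta_chains p (length (ls @ c # rs))" for zs
  proof -
    obtain ns1 n ns2 where zs_eq: "zs = ns1 @ n # ns2" and len: "length ns1 = length ls"
      using id_take_nth_drop[of "length ls" zs] length_zeta_chains[OF zs] by fastforce
    have "0 < n"
      using zeta_chains_pos[OF zs] zs_eq by simp
    have "(of_nat n :: rat) powi - (c - int e) = of_nat n powi (int e + - c)"
      by (simp add: algebra_simps)
    also have "\<dots> = of_nat n ^ e * of_nat n powi - c"
      using \<open>0 < n\<close> by (subst power_int_add) auto
    finally have "(of_nat n :: rat) powi - c * of_nat n ^ e = of_nat n powi - (c - int e)"
      by simp
    then show ?thesis
      unfolding zs_eq using len by (simp add: chain_weight_append_Cons nth_append mult_ac)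
  qed
  then show ?thesis
    by (simp add: zeta_p_entry_power_def zeta_p_eq_sum_chains cong: sum.cong)
qed

lemma zeta_p_eliminate_nonpositive:
  assumes "ks = ls @ (- int k) # rs" and "ls @ rs \<noteq> []"
  shows "zeta_p p ks = 1 / of_nat (k + 1) * (\<Sum>j = 0..k + 1.
           of_nat ((k + 1) choose j) * seki_bernoulli j *
           ((-1) ^ j * zeta_p_entry_power p (ls @ rs) (Suc (length ls)) (k + 1 - j)
            - zeta_p_entry_power p (ls @ rs) (length ls) (k + 1 - j)))"
proof -
  define r where "r = length (ls @ rs)"
  define m where "m = length ls"
  define lo hi where "lo zs = (0 # zs @ [p]) ! m" and "hi zs = (0 # zs @ [p]) ! Suc m" for zs
  define c where "c j = of_nat ((k + 1) choose j) * seki_bernoulli j" for j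
  define w where "w = chain_weight (ls @ rs)"
  have "m \<le> r"
    by (simp add: m_def r_def)
  have lo_less_hi: "lo zs < hi zs" if "zs \<in> zeta_chains p r" for zs
  proof -
    have "sorted_wrt (<) (0 # zs @ [p])" "length zs = r"
      using that by (simp_all add: zeta_chains_def)
    then show ?thesis
      using \<open>m \<le> r\<close> sorted_wrt_nth_less[of "(<)" "0 # zs @ [p]" m "Suc m"]
      unfolding lo_def hi_def by simp
  qed
  have weight: "chain_weight (ls @ (- int k) # rs) (take m zs @ n # drop m zs) = w zs * of_nat n ^ k"
    if "zs \<in> zeta_chains p r" for zs n
    using that \<open>m \<le> r\<close> by (simp add: chain_weight_insert length_zeta_chains m_def w_def)
  have "zeta_p p ks = (\<Sum>ns\<in>zeta_chains p (Suc r). chain_weight (ls @ (- int k) # rs) ns)"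
    by (simp add: assms(1) zeta_p_eq_sum_chains r_def)
  also have "\<dots> = (\<Sum>x\<in>(SIGMA zs:zeta_chains p r. {lo zs<..<hi zs}).
                 chain_weight (ls @ (- int k) # rs) ((\<lambda>(zs, n). take m zs @ n # drop m zs) x))"
    unfolding lo_def hi_def
    by (rule sum.reindex_bij_betw[OF zeta_chains_insert_bij[OF \<open>m \<le> r\<close>], symmetric])
  also have "\<dots> = (\<Sum>zs\<in>zeta_chains p r. \<Sum>n\<in>{lo zs<..<hi zs}.
                 chain_weight (ls @ (- int k) # rs) (take m zs @ n # drop m zs))"
    by (simp add: sum.Sigma finite_zeta_chains split_def)
  also have "\<dots> = (\<Sum>zs\<in>zeta_chains p r. w zs * (\<Sum>n\<in>{lo zs<..<hi zs}. of_nat n ^ k))"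
    by (simp add: weight sum_distrib_left cong: sum.cong)
  also have "\<dots> = (\<Sum>zs\<in>zeta_chains p r. 1 / of_nat (k + 1) * (\<Sum>j = 0..k + 1. c j *
                 ((-1) ^ j * (w zs * of_nat (hi zs) ^ (k + 1 - j))
                  - w zs * of_nat (lo zs) ^ (k + 1 - j))))"
    by (simp add: sum_powers_seki_bernoulli[OF lo_less_hi] c_def sum_distrib_left algebra_simps
        cong: sum.cong)
  also have "\<dots> = 1 / of_nat (k + 1) * (\<Sum>j = 0..k + 1. c j *
                 ((-1) ^ j * (\<Sum>zs\<in>zeta_chains p r. w zs * of_nat (hi zs) ^ (k + 1 - j))
                  - (\<Sum>zs\<in>zeta_chains p r. w zs * of_nat (lo zs) ^ (k + 1 - j))))"
    by (simp add: sum_distrib_left sum_subtractf right_diff_distrib sum.swap[of _ "zeta_chains p r"])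
  finally show ?thesis
    by (simp add: zeta_p_entry_power_def c_def w_def lo_def hi_def m_def r_def)
qed

lemma zeta_p_nonpositive_first:
  "zeta_p p (- int k # c # ks) = 1 / of_nat (k + 1) * (\<Sum>j = 0..k + 1.
     of_nat ((k + 1) choose j) * seki_bernoulli j *
     ((-1) ^ j * zeta_p p ((c - int k - 1 + int j) # ks)
      - (if j = k + 1 then 1 else 0) * zeta_p p (c # ks)))"
proof -
  have upper: "zeta_p_entry_power p (c # ks) (Suc 0) (k + 1 - j)
      = zeta_p p ((c - int k - 1 + int j) # ks)"
    and lower: "zeta_p_entry_power p (c # ks) 0 (k + 1 - j)
      = (if j = k + 1 then 1 else 0) * zeta_p p (c # ks)"
    if "j \<in> {0..k + 1}" for j
    using that zeta_p_entry_power_inner[of p "[]" c ks "k + 1 - j"]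
      zeta_p_entry_power_first[of "c # ks" p "k + 1 - j"] by (auto simp: algebra_simps)
  show ?thesis
    using zeta_p_eliminate_nonpositive[of "- int k # c # ks" "[]" k "c # ks" p]
    by (simp only: append_Nil list.size(3) list.distinct(2) upper lower cong: sum.cong) simp
qed

lemma zeta_p_nonpositive_middle:
  "zeta_p p (ls @ [a, - int k, b] @ rs) = 1 / of_nat (k + 1) * (\<Sum>j = 0..k + 1.
     of_nat ((k + 1) choose j) * seki_bernoulli j *
     ((-1) ^ j * zeta_p p (ls @ [a, b - int k - 1 + int j] @ rs)
      - zeta_p p (ls @ [a - int k - 1 + int j, b] @ rs)))"
proof -
  have upper: "zeta_p_entry_power p (ls @ a # b # rs) (Suc (length (ls @ [a]))) (k + 1 - j)
      = zeta_p p (ls @ [a, b - int k - 1 + int j] @ rs)"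
    and lower: "zeta_p_entry_power p (ls @ a # b # rs) (length (ls @ [a])) (k + 1 - j)
      = zeta_p p (ls @ [a - int k - 1 + int j, b] @ rs)"
    if "j \<in> {0..k + 1}" for j
    using that zeta_p_entry_power_inner[of p "ls @ [a]" b rs "k + 1 - j"]
      zeta_p_entry_power_inner[of p ls a "b # rs" "k + 1 - j"] by (auto simp: algebra_simps)
  show ?thesis
    using zeta_p_eliminate_nonpositive[of "ls @ [a, - int k, b] @ rs" "ls @ [a]" k "b # rs" p]
    by (simp only: append_assoc append_Cons append_Nil upper lower cong: sum.cong) simp
qed

lemma zeta_p_nonpositive_last:
  "zeta_p p (ks @ [a, - int k]) = 1 / of_nat (k + 1) * (\<Sum>j = 0..k + 1.
     of_nat ((k + 1) choose j) * seki_bernoulli j *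
     ((-1) ^ j * zeta_p p (ks @ [a]) * of_nat p ^ (k + 1 - j)
      - zeta_p p (ks @ [a - int k - 1 + int j])))"
proof -
  have upper: "zeta_p_entry_power p (ks @ [a]) (Suc (length (ks @ [a]))) (k + 1 - j)
      = zeta_p p (ks @ [a]) * of_nat p ^ (k + 1 - j)"
    and lower: "zeta_p_entry_power p (ks @ [a]) (length (ks @ [a])) (k + 1 - j)
      = zeta_p p (ks @ [a - int k - 1 + int j])"
    if "j \<in> {0..k + 1}" for j
    using that zeta_p_entry_power_last[of "ks @ [a]" p "k + 1 - j"]
      zeta_p_entry_power_inner[of p ks a "[]" "k + 1 - j"] by (auto simp: algebra_simps)
  show ?thesis
    using zeta_p_eliminate_nonpositive[of "ks @ [a, - int k]" "ks @ [a]" k "[]" p]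
    by (simp only: append_assoc append_Cons append_Nil append_Nil2 upper lower mult.assoc
        cong: sum.cong) simp
qed

lemma padic_cong_refl:
  assumes "prime p"
  shows "padic_cong p n a a"
proof -
  have "\<not> int p dvd 1"
    using assms by (metis int_dvd_int_iff nat_dvd_1_iff_1 not_prime_1 of_nat_1)
  then show ?thesis
    unfolding padic_cong_def by (intro exI[of _ 0] exI[of _ 1]) simp
qed

lemma ahat_eq_if_eq:
  assumes "\<And>p. a p = b p"
  shows "a \<doteq>\<^sub>A b"
proof -
  have "{p. prime p \<and> \<not> padic_cong p n (a p) (b p)} = {}" for n
    using assms padic_cong_refl by auto
  then show ?thesis
    unfolding ahat_eq_def by (metis finite.emptyI)
qed

theorem theorem1p3:
  fixes ks :: "int list" and i k :: nat
  assumes "length ks \<ge> 2"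
    and "1 \<le> i" and "i \<le> length ks"
    and "ks ! (i - 1) = - int k"
  shows
   "(i = 1 \<longrightarrow>
      zeta_A ks \<doteq>\<^sub>A (\<lambda>p. 1 / of_nat (k + 1) * (\<Sum>j = 0..k + 1.
         of_nat ((k + 1) choose j) * seki_bernoulli j *
         ((-1) ^ j * zeta_A ((ks ! 1 - int k - 1 + int j) # drop 2 ks) p
          - (if j = k + 1 then 1 else 0) * zeta_A (drop 1 ks) p))))
  \<and> (1 < i \<and> i < length ks \<longrightarrow>
      zeta_A ks \<doteq>\<^sub>A (\<lambda>p. 1 / of_nat (k + 1) * (\<Sum>j = 0..k + 1.
         of_nat ((k + 1) choose j) * seki_bernoulli j *
         ((-1) ^ j * zeta_A (take (i - 1) ks @ [ks ! i - int k - 1 + int j] @ drop (i + 1) ks) p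
          - zeta_A (take (i - 2) ks @ [ks ! (i - 2) - int k - 1 + int j] @ drop i ks) p))))
  \<and> (i = length ks \<longrightarrow>
      zeta_A ks \<doteq>\<^sub>A (\<lambda>p. 1 / of_nat (k + 1) * (\<Sum>j = 0..k + 1.
         of_nat ((k + 1) choose j) * seki_bernoulli j *
         ((-1) ^ j * zeta_A (take (length ks - 1) ks) p * of_nat p ^ (k + 1 - j)
          - zeta_A (take (length ks - 2) ks @ [ks ! (length ks - 2) - int k - 1 + int j]) p))))"
proof -
  obtain ls rs where ks: "ks = ls @ (- int k) # rs" and ls: "length ls = i - 1"
  proof (rule that)
    show "ks = take (i - 1) ks @ (- int k) # drop i ks"
      using assms(2-4) id_take_nth_drop[of "i - 1" ks] by simp
  qed (use assms in simp)
  show ?thesis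
  proof (intro conjI impI ahat_eq_if_eq, goal_cases)
    case (1 p)
    then obtain c cs where "ks = - int k # c # cs"
      using ks ls assms(1) by (cases rs) auto
    then show ?case
      by (simp add: zeta_A_def zeta_p_nonpositive_first)
  next
    case (2 p)
    then obtain ls' a b rs' where "ks = ls' @ [a, - int k, b] @ rs'" and "i = length ls' + 2"
      using ks ls by (cases ls rule: rev_cases; cases rs) auto
    then show ?case
      using zeta_p_nonpositive_middle[of p ls' a k b rs'] by (simp add: zeta_A_def nth_append)
  next
    case (3 p)
    then obtain ls' a where "ks = ls' @ [a, - int k]"
      using ks ls assms(1) by (cases ls rule: rev_cases; cases rs) auto
    then show ?case
      by (simp add: zeta_A_def zeta_p_nonpositive_last)
  qed
qed

end
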